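(* Let $M$ be a finitely generated monoid and let $I$ be an ideal of $M$. If $M$ is strongly $\delta$-hyperbolic (with respect to some finite generating set, for some real $\delta\ge 0$) then the Rees quotient $M/I$ is strongly hyperbolic.
   Context: Directed graphs may have loops and multiple edges; $d(u,v)$ is the length of a shortest directed path from $u$ to $v$ ($\infty$ if none). Out-ball $\overrightarrow{\mathcal{B}}_r(x)=\{y : d(x,y)\le r\}$, in-ball $\overleftarrow{\mathcal{B}}_r(x)=\{y : d(y,x)\le r\}$, extended to sets by union. A path $[x_0,\dots,x_n]$ is a geodesic if $n=d(x_0,x_n)$. A directed geodesic triangle is an ordered triple $(p,q,r)$ of geodesics with the end of $p$ equal to the start of $q$ and $p\circ q$ having the same start and end as $r$; it is $\delta$-thin if every vertex of $r$ lies in $\overrightarrow{\mathcal{B}}_\delta(p)\cup\overleftarrow{\mathcal{B}}_\delta(q)$, every vertex of $p$ lies in $\overrightarrow{\mathcal{B}}_\delta(r)\cup\overleftarrow{\mathcal{B}}_\delta(q)$, and every vertex of $q$ lies in $\overrightarrow{\mathcal{B}}_\delta(p)\cup\overleftarrow{\mathcal{B}}_\delta(r)$. A directed graph is strongly $\delta$-hyperbolic if all its directed geodesic triangles are $\delta$-thin. A monoid generated by a finite set $A$ is strongly $\delta$-hyperbolic w.r.t. $A$ if its right Cayley graph (vertex set the monoid, edge $m\to n$ for each $a\in A$ with $ma=n$) is strongly $\delta$-hyperbolic; it is strongly hyperbolic if this holds for some finite generating set and some $\delta$. The Rees quotient $M/I$ is $(M\setminus I)\cup\{0\}$ with the product of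 $x,y$ equal to $xy$ if $xy\notin I$ and $0$ otherwise (and $0$ a zero element). *)

theory Defs
  imports Complex_Main "HOL-Algebra.Group"
begin

text \<open>A path is a nonempty list of vertices with consecutive vertices joined by edges;
its length is the number of edges. Multiple edges are irrelevant for paths-as-vertex-lists.\<close>

definition is_dpath :: "'v set \<Rightarrow> ('v \<Rightarrow> 'v \<Rightarrow> bool) \<Rightarrow> 'v list \<Rightarrow> bool" where
  "is_dpath V E xs \<longleftrightarrow> xs \<noteq> [] \<and> set xs \<subseteq> V \<and>
     (\<forall>i. Suc i < length xs \<longrightarrow> E (xs ! i) (xs ! Suc i))"

definition has_path_len :: "'v set \<Rightarrow> ('v \<Rightarrow> 'v \<Rightarrow> bool) \<Rightarrow> 'v \<Rightarrow> 'v \<Rightarrow> nat \<Rightarrow> bool" where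
  "has_path_len V E u v n \<longleftrightarrow>
     (\<exists>xs. is_dpath V E xs \<and> hd xs = u \<and> last xs = v \<and> length xs = Suc n)"

text \<open>d(u,v) \<le> r  (false if d(u,v) = \<infinity>)\<close>
definition dist_le :: "'v set \<Rightarrow> ('v \<Rightarrow> 'v \<Rightarrow> bool) \<Rightarrow> 'v \<Rightarrow> 'v \<Rightarrow> real \<Rightarrow> bool" where
  "dist_le V E u v r \<longleftrightarrow> (\<exists>n. real n \<le> r \<and> has_path_len V E u v n)"

definition geodesic :: "'v set \<Rightarrow> ('v \<Rightarrow> 'v \<Rightarrow> bool) \<Rightarrow> 'v list \<Rightarrow> bool" where
  "geodesic V E xs \<longleftrightarrow> is_dpath V E xs \<and>
     (\<forall>m. has_path_len V E (hd xs) (last xs) m \<longrightarrow> length xs - 1 \<le> m)"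

definition out_ball :: "'v set \<Rightarrow> ('v \<Rightarrow> 'v \<Rightarrow> bool) \<Rightarrow> real \<Rightarrow> 'v set \<Rightarrow> 'v set" where
  "out_ball V E r S = {y \<in> V. \<exists>x\<in>S. dist_le V E x y r}"

definition in_ball :: "'v set \<Rightarrow> ('v \<Rightarrow> 'v \<Rightarrow> bool) \<Rightarrow> real \<Rightarrow> 'v set \<Rightarrow> 'v set" where
  "in_ball V E r S = {y \<in> V. \<exists>x\<in>S. dist_le V E y x r}"

definition geodesic_triangle ::
  "'v set \<Rightarrow> ('v \<Rightarrow> 'v \<Rightarrow> bool) \<Rightarrow> 'v list \<Rightarrow> 'v list \<Rightarrow> 'v list \<Rightarrow> bool" where
  "geodesic_triangle V E p q r \<longleftrightarrow> geodesic V E p \<and> geodesic V E q \<and> geodesic V E r \<and>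
     last p = hd q \<and> hd r = hd p \<and> last r = last q"

definition thin_triangle ::
  "'v set \<Rightarrow> ('v \<Rightarrow> 'v \<Rightarrow> bool) \<Rightarrow> real \<Rightarrow> 'v list \<Rightarrow> 'v list \<Rightarrow> 'v list \<Rightarrow> bool" where
  "thin_triangle V E \<delta> p q r \<longleftrightarrow>
     set r \<subseteq> out_ball V E \<delta> (set p) \<union> in_ball V E \<delta> (set q) \<and>
     set p \<subseteq> out_ball V E \<delta> (set r) \<union> in_ball V E \<delta> (set q) \<and>
     set q \<subseteq> out_ball V E \<delta> (set p) \<union> in_ball V E \<delta> (set r)"

definition strongly_hyperbolic_graph ::
  "'v set \<Rightarrow> ('v \<Rightarrow> 'v \<Rightarrow> bool) \<Rightarrow> real \<Rightarrow> bool" where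
  "strongly_hyperbolic_graph V E \<delta> \<longleftrightarrow>
     (\<forall>p q r. geodesic_triangle V E p q r \<longrightarrow> thin_triangle V E \<delta> p q r)"

definition generates :: "('a, 'b) monoid_scheme \<Rightarrow> 'a set \<Rightarrow> bool" where
  "generates M A \<longleftrightarrow> A \<subseteq> carrier M \<and>
     (\<forall>x\<in>carrier M. \<exists>as\<in>lists A. x = foldr (\<otimes>\<^bsub>M\<^esub>) as \<one>\<^bsub>M\<^esub>)"

definition finitely_generated_monoid :: "('a, 'b) monoid_scheme \<Rightarrow> bool" where
  "finitely_generated_monoid M \<longleftrightarrow> (\<exists>A. finite A \<and> generates M A)"

definition cayley_edge :: "('a, 'b) monoid_scheme \<Rightarrow> 'a set \<Rightarrow> 'a \<Rightarrow> 'a \<Rightarrow> bool" where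
  "cayley_edge M A m n \<longleftrightarrow> m \<in> carrier M \<and> (\<exists>a\<in>A. m \<otimes>\<^bsub>M\<^esub> a = n)"

definition strongly_hyperbolic_wrt ::
  "('a, 'b) monoid_scheme \<Rightarrow> 'a set \<Rightarrow> real \<Rightarrow> bool" where
  "strongly_hyperbolic_wrt M A \<delta> \<longleftrightarrow>
     strongly_hyperbolic_graph (carrier M) (cayley_edge M A) \<delta>"

definition strongly_hyperbolic_monoid :: "('a, 'b) monoid_scheme \<Rightarrow> bool" where
  "strongly_hyperbolic_monoid M \<longleftrightarrow>
     (\<exists>A \<delta>. finite A \<and> generates M A \<and> strongly_hyperbolic_wrt M A \<delta>)"

definition monoid_ideal :: "('a, 'b) monoid_scheme \<Rightarrow> 'a set \<Rightarrow> bool" where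
  "monoid_ideal M I \<longleftrightarrow> I \<subseteq> carrier M \<and> I \<noteq> {} \<and>
     (\<forall>x\<in>carrier M. \<forall>i\<in>I. x \<otimes>\<^bsub>M\<^esub> i \<in> I \<and> i \<otimes>\<^bsub>M\<^esub> x \<in> I)"

text \<open>Rees quotient M/I: elements of M - I are Some m, the zero is None.\<close>
definition rees_quotient :: "('a, 'b) monoid_scheme \<Rightarrow> 'a set \<Rightarrow> 'a option monoid" where
  "rees_quotient M I =
     \<lparr> carrier = Some ` (carrier M - I) \<union> {None},
       mult = (\<lambda>x y. case (x, y) of
                 (Some a, Some b) \<Rightarrow> (if a \<otimes>\<^bsub>M\<^esub> b \<in> I then None else Some (a \<otimes>\<^bsub>M\<^esub> b))
               | _ \<Rightarrow> None),
       one = (if \<one>\<^bsub>M\<^esub> \<in> I then None else Some \<one>\<^bsub>M\<^esub>) \<rparr>"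

end

theory Submission
  imports Defs
begin

text \<open>In the right Cayley graph of \<open>M/I\<close> with respect to \<open>(A - I) \<union> {0}\<close>, the zero is a sink
  reached in one step from every vertex, and the remaining vertices \<open>M - I\<close> carry exactly the
  Cayley graph of \<open>M\<close> restricted to \<open>M - I\<close>. Since \<open>I\<close> is an ideal, a path of \<open>M\<close> ending
  outside \<open>I\<close> never meets \<open>I\<close>, so distances between elements of \<open>M - I\<close> are the same in both
  graphs. Hence a geodesic triangle of \<open>M/I\<close> either ends at zero, and is then \<open>1\<close>-thin because
  every vertex is within distance \<open>1\<close> of zero, or it is a geodesic triangle of \<open>M\<close> and is
  \<open>\<delta>\<close>-thin.\<close>

lemma is_dpath_Cons:
  "is_dpath V E (x # xs) \<longleftrightarrow> x \<in> V \<and> (xs \<noteq> [] \<longrightarrow> E x (hd xs) \<and> is_dpath V E xs)"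
proof (cases xs)
  case (Cons y ys)
  have "(\<forall>i. Suc i < length (x # xs) \<longrightarrow> E ((x # xs) ! i) ((x # xs) ! Suc i)) \<longleftrightarrow>
        E x y \<and> (\<forall>i. Suc i < length xs \<longrightarrow> E (xs ! i) (xs ! Suc i))"
    unfolding Cons length_Cons
    by (metis Suc_less_eq not0_implies_Suc zero_less_Suc nth_Cons_0 nth_Cons_Suc)
  then show ?thesis using Cons by (auto simp: is_dpath_def)
qed (auto simp: is_dpath_def)

lemma has_path_len_endpoints: "has_path_len V E u v n \<Longrightarrow> u \<in> V \<and> v \<in> V"
  unfolding has_path_len_def is_dpath_def by (metis hd_in_set last_in_set subsetD)

lemma dist_le_mono: "dist_le V E x y d \<Longrightarrow> d \<le> d' \<Longrightarrow> dist_le V E x y d'"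
  unfolding dist_le_def by force

lemma thin_triangle_mono:
  assumes "thin_triangle V E \<delta> p q r" and "\<delta> \<le> \<delta>'"
  shows "thin_triangle V E \<delta>' p q r"
proof -
  have "out_ball V E \<delta> S \<subseteq> out_ball V E \<delta>' S" "in_ball V E \<delta> S \<subseteq> in_ball V E \<delta>' S" for S
    by (auto simp: out_ball_def in_ball_def intro: dist_le_mono[OF _ assms(2)])
  then show ?thesis using assms(1) unfolding thin_triangle_def by blast
qed

lemma dpath_subset_backward_closed:
  assumes closed: "\<And>x y. E x y \<Longrightarrow> y \<in> U \<Longrightarrow> x \<in> U"
    and "is_dpath V E xs" and "last xs \<in> U"
  shows "set xs \<subseteq> U"
  using assms(2,3)
proof (induction xs)
  case (Cons x xs)
  then show ?case
    by (cases xs) (auto simp: is_dpath_Cons intro: closed[of x "hd xs"])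
qed simp

lemma last_dpath_through_sink:
  assumes sink: "\<And>y. E z y \<Longrightarrow> y = z"
    and "is_dpath V E xs" and "z \<in> set xs"
  shows "last xs = z"
  using assms(2,3)
proof (induction xs)
  case (Cons x xs)
  show ?case
  proof (cases xs)
    case (Cons y ys)
    then have "z \<in> set xs"
      using Cons.prems sink[of y] by (auto simp: is_dpath_Cons)
    then show ?thesis using Cons.IH Cons.prems Cons by (simp add: is_dpath_Cons)
  qed (use Cons.prems in simp)
qed simp

lemma is_dpath_map_iff:
  assumes "set xs \<subseteq> U" and "U \<subseteq> V" and "f ` U \<subseteq> V'"
    and edges: "\<And>x y. x \<in> U \<Longrightarrow> y \<in> U \<Longrightarrow> E' (f x) (f y) \<longleftrightarrow> E x y"
  shows "is_dpath V' E' (map f xs) \<longleftrightarrow> is_dpath V E xs"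
  using assms(1)
proof (induction xs)
  case (Cons x xs)
  then show ?case
    using assms(2,3) edges[of x "hd xs"] by (cases xs) (auto simp: is_dpath_Cons)
qed (simp add: is_dpath_def)

locale rees_cayley =
  fixes M :: "('a, 'b) monoid_scheme" and I :: "'a set" and A :: "'a set"
  assumes monoid: "monoid M" and ideal: "monoid_ideal M I" and generates: "generates M A"
begin

abbreviation "Q \<equiv> rees_quotient M I"
abbreviation "A' \<equiv> Some ` (A - I) \<union> {None}"
abbreviation "V \<equiv> carrier M"
abbreviation "E \<equiv> cayley_edge M A"
abbreviation "V' \<equiv> carrier Q"
abbreviation "E' \<equiv> cayley_edge Q A'"

lemma generators_subset: "A \<subseteq> V"
  using generates by (simp add: generates_def)

lemma carrier_rees: "V' = Some ` (V - I) \<union> {None}"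
  by (simp add: rees_quotient_def)

lemma mult_rees:
  "mult Q x y = (case (x, y) of
     (Some a, Some b) \<Rightarrow> (if a \<otimes>\<^bsub>M\<^esub> b \<in> I then None else Some (a \<otimes>\<^bsub>M\<^esub> b)) | _ \<Rightarrow> None)"
  by (simp add: rees_quotient_def)

lemma ideal_absorbs: "x \<in> V \<Longrightarrow> y \<in> V \<Longrightarrow> x \<in> I \<or> y \<in> I \<Longrightarrow> x \<otimes>\<^bsub>M\<^esub> y \<in> I"
  using ideal by (auto simp: monoid_ideal_def)

lemma edge_to_zero: "x \<in> V' \<Longrightarrow> E' x None"
  unfolding cayley_edge_def by (auto simp: mult_rees intro!: bexI[of _ None] split: option.splits)

lemma zero_is_sink: "E' None y \<Longrightarrow> y = None"
  unfolding cayley_edge_def by (auto simp: mult_rees)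

lemma edge_Some_iff:
  assumes "m \<in> V - I" and "n \<in> V - I"
  shows "E' (Some m) (Some n) \<longleftrightarrow> E m n"
proof
  assume "E' (Some m) (Some n)"
  then obtain b where "b \<in> A - I" "m \<otimes>\<^bsub>M\<^esub> b = n"
    unfolding cayley_edge_def by (auto simp: mult_rees split: option.splits if_splits)
  then show "E m n" using assms unfolding cayley_edge_def by blast
next
  assume "E m n"
  then obtain a where a: "a \<in> A" "m \<otimes>\<^bsub>M\<^esub> a = n" unfolding cayley_edge_def by blast
  then have "a \<notin> I" using assms ideal_absorbs generators_subset by blast
  then show "E' (Some m) (Some n)"
    using a assms unfolding cayley_edge_def by (auto simp: carrier_rees mult_rees)
qed

lemma edge_into_complement: "E x y \<Longrightarrow> y \<in> V - I \<Longrightarrow> x \<in> V - I"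
  unfolding cayley_edge_def using ideal_absorbs generators_subset by blast

lemma dpath_Some_iff:
  assumes "set xs \<subseteq> V - I"
  shows "is_dpath V' E' (map Some xs) \<longleftrightarrow> is_dpath V E xs"
proof (rule is_dpath_map_iff)
  show "E' (Some x) (Some y) \<longleftrightarrow> E x y" if "x \<in> V - I" "y \<in> V - I" for x y
    using that by (rule edge_Some_iff)
qed (use assms in \<open>auto simp: carrier_rees\<close>)

lemma dpath_avoiding_zero:
  assumes "is_dpath V' E' ys" and "None \<notin> set ys"
  obtains xs where "ys = map Some xs" "set xs \<subseteq> V - I" "is_dpath V E xs"
proof
  have ys: "set ys \<subseteq> Some ` (V - I)"
    using assms by (auto simp: is_dpath_def carrier_rees)
  show "ys = map Some (map the ys)"
    using assms(2) by (induction ys) auto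
  show "set (map the ys) \<subseteq> V - I" using ys by auto
  then show "is_dpath V E (map the ys)"
    using assms(1) dpath_Some_iff \<open>ys = map Some (map the ys)\<close> by metis
qed

lemma has_path_len_Some:
  assumes "n \<in> V - I" and "has_path_len V E m n k"
  shows "has_path_len V' E' (Some m) (Some n) k"
proof -
  obtain xs where xs: "is_dpath V E xs" "hd xs = m" "last xs = n" "length xs = Suc k"
    using assms(2) by (auto simp: has_path_len_def)
  have "last xs \<in> V - I" using xs(3) assms(1) by simp
  with edge_into_complement xs(1) have "set xs \<subseteq> V - I" by (rule dpath_subset_backward_closed)
  then have "is_dpath V' E' (map Some xs)" using xs(1) dpath_Some_iff by blast
  moreover have "xs \<noteq> []" using xs(4) by auto
  ultimately show ?thesis
    unfolding has_path_len_def using xs by (auto simp: hd_map last_map)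
qed

lemma geodesic_of_Some:
  assumes "geodesic V' E' (map Some xs)" and "set xs \<subseteq> V - I"
  shows "geodesic V E xs"
  unfolding geodesic_def
proof (intro conjI allI impI)
  show path: "is_dpath V E xs" using assms dpath_Some_iff by (auto simp: geodesic_def)
  then have "xs \<noteq> []" by (simp add: is_dpath_def)
  fix k assume "has_path_len V E (hd xs) (last xs) k"
  then have "has_path_len V' E' (Some (hd xs)) (Some (last xs)) k"
    using has_path_len_Some assms(2) last_in_set[OF \<open>xs \<noteq> []\<close>] by blast
  then show "length xs - 1 \<le> k"
    using assms(1) \<open>xs \<noteq> []\<close> by (auto simp: geodesic_def hd_map last_map)
qed

lemma out_ball_Some:
  assumes "y \<in> out_ball V E d S" and "y \<notin> I"
  shows "Some y \<in> out_ball V' E' d (Some ` S)"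
proof -
  obtain x n where x: "x \<in> S" "real n \<le> d" and path: "has_path_len V E x y n" "y \<in> V"
    using assms(1) by (auto simp: out_ball_def dist_le_def)
  have path': "has_path_len V' E' (Some x) (Some y) n"
    using path assms(2) by (intro has_path_len_Some) simp_all
  have "Some y \<in> V'" using has_path_len_endpoints[OF path'] by blast
  with x path' show ?thesis
    unfolding out_ball_def dist_le_def by (intro CollectI conjI bexI[of _ "Some x"] exI[of _ n]) auto
qed

lemma in_ball_Some:
  assumes "y \<in> in_ball V E d S" and "S \<subseteq> V - I"
  shows "Some y \<in> in_ball V' E' d (Some ` S)"
proof -
  obtain x n where x: "x \<in> S" "real n \<le> d" and path: "has_path_len V E y x n"
    using assms(1) by (auto simp: in_ball_def dist_le_def)
  have path': "has_path_len V' E' (Some y) (Some x) n"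
    using x path assms(2) by (intro has_path_len_Some) auto
  have "Some y \<in> V'" using has_path_len_endpoints[OF path'] by blast
  with x path' show ?thesis
    unfolding in_ball_def dist_le_def by (intro CollectI conjI bexI[of _ "Some x"] exI[of _ n]) auto
qed

lemma in_ball_of_zero:
  assumes "y \<in> V'" and "None \<in> S" and "1 \<le> d"
  shows "y \<in> in_ball V' E' d S"
proof -
  have "is_dpath V' E' [y, None]"
    using assms(1) edge_to_zero by (simp add: is_dpath_Cons carrier_rees)
  then have "has_path_len V' E' y None 1"
    unfolding has_path_len_def by (intro exI[of _ "[y, None]"]) simp
  then have "dist_le V' E' y None d"
    unfolding dist_le_def using assms(3) by (intro exI[of _ 1]) simp
  then show ?thesis unfolding in_ball_def using assms(1,2) by blast
qed

lemma thin_triangle_Some: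
  assumes "thin_triangle V E \<delta> p q r"
    and "set p \<subseteq> V - I" "set q \<subseteq> V - I" "set r \<subseteq> V - I"
  shows "thin_triangle V' E' \<delta> (map Some p) (map Some q) (map Some r)"
proof -
  have "Some ` T \<subseteq> out_ball V' E' \<delta> (Some ` S) \<union> in_ball V' E' \<delta> (Some ` S')"
    if "T \<subseteq> out_ball V E \<delta> S \<union> in_ball V E \<delta> S'" "T \<subseteq> V - I" "S' \<subseteq> V - I" for T S S'
    using that out_ball_Some in_ball_Some by blast
  then show ?thesis using assms unfolding thin_triangle_def set_map by meson
qed

lemma thin_triangle_ending_at_zero:
  assumes "geodesic_triangle V' E' p q r" and "last q = None" and "1 \<le> d"
  shows "thin_triangle V' E' d p q r"
proof -
  have "is_dpath V' E' p" "is_dpath V' E' q" "is_dpath V' E' r" "last r = last q"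
    using assms(1) by (auto simp: geodesic_triangle_def geodesic_def)
  then have "None \<in> set q" "None \<in> set r" "set p \<subseteq> V'" "set q \<subseteq> V'" "set r \<subseteq> V'"
    using assms(2) last_in_set by (metis is_dpath_def)+
  then show ?thesis
    unfolding thin_triangle_def using in_ball_of_zero[OF _ _ assms(3)] by blast
qed

lemma geodesic_triangle_avoiding_zero:
  assumes "geodesic_triangle V' E' p q r" and "last q \<noteq> None"
  obtains p\<^sub>M q\<^sub>M r\<^sub>M where "p = map Some p\<^sub>M" "q = map Some q\<^sub>M" "r = map Some r\<^sub>M"
    "set p\<^sub>M \<subseteq> V - I" "set q\<^sub>M \<subseteq> V - I" "set r\<^sub>M \<subseteq> V - I"
    "geodesic_triangle V E p\<^sub>M q\<^sub>M r\<^sub>M"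
proof -
  have paths: "is_dpath V' E' p" "is_dpath V' E' q" "is_dpath V' E' r"
    and ends: "last p = hd q" "hd r = hd p" "last r = last q"
    using assms(1) by (auto simp: geodesic_triangle_def geodesic_def)
  have "q \<noteq> []" using paths by (simp add: is_dpath_def)
  have "None \<notin> set q" "None \<notin> set r"
    using last_dpath_through_sink[OF zero_is_sink] paths ends assms(2) by metis+
  moreover have "None \<notin> set p"
  proof
    assume "None \<in> set p"
    then have "None \<in> set q"
      using last_dpath_through_sink[OF zero_is_sink paths(1)] ends(1) hd_in_set[OF \<open>q \<noteq> []\<close>]
      by metis
    then show False using calculation by blast
  qed
  ultimately obtain p\<^sub>M q\<^sub>M r\<^sub>M where
    lifts: "p = map Some p\<^sub>M" "q = map Some q\<^sub>M" "r = map Some r\<^sub>M"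
    and sets: "set p\<^sub>M \<subseteq> V - I" "set q\<^sub>M \<subseteq> V - I" "set r\<^sub>M \<subseteq> V - I"
    and "p\<^sub>M \<noteq> []" "q\<^sub>M \<noteq> []" "r\<^sub>M \<noteq> []"
    using dpath_avoiding_zero paths by (metis is_dpath_def)
  moreover have "geodesic_triangle V E p\<^sub>M q\<^sub>M r\<^sub>M"
    using assms(1) geodesic_of_Some sets calculation
    by (auto simp: geodesic_triangle_def lifts hd_map last_map)
  ultimately show ?thesis using that by blast
qed

lemma foldr_closed: "as \<in> lists A \<Longrightarrow> foldr (\<otimes>\<^bsub>M\<^esub>) as \<one>\<^bsub>M\<^esub> \<in> V"
  using generators_subset by (induction as) (auto simp: monoid.m_closed[OF monoid] monoid.one_closed[OF monoid])

lemma foldr_Some_rees: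
  assumes "as \<in> lists A" and "foldr (\<otimes>\<^bsub>M\<^esub>) as \<one>\<^bsub>M\<^esub> \<notin> I"
  shows "set as \<subseteq> A - I \<and>
    foldr (mult Q) (map Some as) (one Q) = Some (foldr (\<otimes>\<^bsub>M\<^esub>) as \<one>\<^bsub>M\<^esub>)"
  using assms
proof (induction as rule: lists.induct)
  case (Cons a as)
  then have "a \<in> V" "foldr (\<otimes>\<^bsub>M\<^esub>) as \<one>\<^bsub>M\<^esub> \<in> V"
    using generators_subset foldr_closed by auto
  then have "a \<notin> I" "foldr (\<otimes>\<^bsub>M\<^esub>) as \<one>\<^bsub>M\<^esub> \<notin> I"
    using Cons.prems ideal_absorbs by auto
  then show ?case using Cons by (simp add: mult_rees)
qed (simp add: rees_quotient_def)

lemma generates_rees: "generates Q A'"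
  unfolding generates_def
proof (intro conjI ballI)
  show "A' \<subseteq> V'" using generators_subset by (auto simp: carrier_rees)
  fix x assume "x \<in> V'"
  then consider "x = None" | y where "x = Some y" "y \<in> V - I" by (auto simp: carrier_rees)
  then show "\<exists>as\<in>lists A'. x = foldr (mult Q) as (one Q)"
  proof cases
    case 1
    then show ?thesis by (intro bexI[of _ "[None]"]) (auto simp: mult_rees)
  next
    case 2
    then obtain as where as: "as \<in> lists A" "y = foldr (\<otimes>\<^bsub>M\<^esub>) as \<one>\<^bsub>M\<^esub>"
      using generates unfolding generates_def by blast
    then have "set as \<subseteq> A - I" "foldr (mult Q) (map Some as) (one Q) = x"
      using foldr_Some_rees[OF as(1)] 2 by auto
    moreover from this(1) have "map Some as \<in> lists A'"
      by (simp add: lists_eq_set) blast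
    ultimately show ?thesis by blast
  qed
qed

lemma strongly_hyperbolic_rees:
  assumes "strongly_hyperbolic_wrt M A \<delta>"
  shows "strongly_hyperbolic_wrt Q A' (max \<delta> 1)"
  unfolding strongly_hyperbolic_wrt_def strongly_hyperbolic_graph_def
proof (intro allI impI)
  fix p q r assume tri: "geodesic_triangle V' E' p q r"
  show "thin_triangle V' E' (max \<delta> 1) p q r"
  proof (cases "last q = None")
    case True
    then show ?thesis using thin_triangle_ending_at_zero[OF tri] by simp
  next
    case False
    then obtain p\<^sub>M q\<^sub>M r\<^sub>M where "p = map Some p\<^sub>M" "q = map Some q\<^sub>M" "r = map Some r\<^sub>M"
      "set p\<^sub>M \<subseteq> V - I" "set q\<^sub>M \<subseteq> V - I" "set r\<^sub>M \<subseteq> V - I" "geodesic_triangle V E p\<^sub>M q\<^sub>M r\<^sub>M"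
      using geodesic_triangle_avoiding_zero[OF tri] by blast
    with assms show ?thesis
      using thin_triangle_Some thin_triangle_mono[of V' E' \<delta> _ _ _ "max \<delta> 1"]
      by (simp add: strongly_hyperbolic_wrt_def strongly_hyperbolic_graph_def)
  qed
qed

end

theorem proposition4p8:
  fixes M :: "('a, 'b) monoid_scheme" and I :: "'a set" and A :: "'a set" and \<delta> :: real
  assumes "monoid M"
    and "finitely_generated_monoid M"
    and "monoid_ideal M I"
    and "finite A" and "generates M A" and "\<delta> \<ge> 0"
    and "strongly_hyperbolic_wrt M A \<delta>"
  shows "strongly_hyperbolic_monoid (rees_quotient M I)"
proof -
  interpret rees_cayley M I A
    by (rule rees_cayley.intro) (fact assms)+
  have "finite (Some ` (A - I) \<union> {None})" using \<open>finite A\<close> by simp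
  then show ?thesis
    unfolding strongly_hyperbolic_monoid_def
    using generates_rees strongly_hyperbolic_rees[OF assms(7)] by blast
qed

end
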